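(* There exists a CPwL map $F:\mathbb{R}^2\to\mathbb{R}^2$ such that \[ F(E(t))=E(r(t))\qquad\text{for all } t\in[0,1]. \] Moreover, $F$ admits an exact finite ReLU network realization (of some fixed width and depth).
   Context: $r:[0,1]\to[0,1]$ is defined by $r(t)=2t-\lfloor 2t\rfloor$ for $t\in[0,1)$ and $r(1)=1$. Let $\Gamma$ be the boundary of the triangle with vertices $a_0=(0,0)$, $a_1=(1,1)$, $a_2=(1,0)$, parametrized by $E:[0,1]\to\Gamma$, \[ E(t)=\begin{cases}(3t,3t),&0\le t\le\tfrac13,\\(1,2-3t),&\tfrac13\le t\le\tfrac23,\\(3-3t,0),&\tfrac23\le t\le1.\end{cases} \] CPwL means continuous piecewise linear (continuous, and affine on the cells of a finite polygonal subdivision of every compact set). *)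

theory Defs
  imports "HOL-Analysis.Analysis"
begin

definition r_map :: "real \<Rightarrow> real" where
  "r_map t = (if t = 1 then 1 else 2 * t - of_int \<lfloor>2 * t\<rfloor>)"

definition E_param :: "real \<Rightarrow> real \<times> real" where
  "E_param t = (if t \<le> 1/3 then (3*t, 3*t)
                else if t \<le> 2/3 then (1, 2 - 3*t)
                else (3 - 3*t, 0))"

definition affine_on :: "(real \<times> real \<Rightarrow> real \<times> real) \<Rightarrow> (real \<times> real) set \<Rightarrow> bool" where
  "affine_on F P \<longleftrightarrow> (\<exists>A b. linear A \<and> (\<forall>x\<in>P. F x = A x + b))"

definition CPwL :: "(real \<times> real \<Rightarrow> real \<times> real) \<Rightarrow> bool" where
  "CPwL F \<longleftrightarrow> continuous_on UNIV F \<and>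
     (\<forall>K. compact K \<longrightarrow> (\<exists>\<C>. finite \<C> \<and> K \<subseteq> \<Union>\<C> \<and>
        (\<forall>P\<in>\<C>. polytope P \<and> affine_on F P)))"

text \<open>ReLU networks: a list of layers (W, b), with W a list of rows.\<close>
definition relu :: "real \<Rightarrow> real" where
  "relu x = max 0 x"

definition layer_affine :: "real list list \<times> real list \<Rightarrow> real list \<Rightarrow> real list" where
  "layer_affine L x = map2 (\<lambda>row bi. sum_list (map2 (*) row x) + bi) (fst L) (snd L)"

fun net_eval :: "(real list list \<times> real list) list \<Rightarrow> real list \<Rightarrow> real list" where
  "net_eval [] x = x"
| "net_eval [L] x = layer_affine L x"
| "net_eval (L # Ls) x = net_eval Ls (map relu (layer_affine L x))"

fun valid_net :: "nat \<Rightarrow> nat \<Rightarrow> (real list list \<times> real list) list \<Rightarrow> bool" where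
  "valid_net n m [] \<longleftrightarrow> n = m"
| "valid_net n m (L # Ls) \<longleftrightarrow>
     length (fst L) = length (snd L) \<and> (\<forall>row\<in>set (fst L). length row = n) \<and>
     valid_net (length (snd L)) m Ls"

definition relu_realizes :: "(real list list \<times> real list) list \<Rightarrow> (real \<times> real \<Rightarrow> real \<times> real) \<Rightarrow> bool" where
  "relu_realizes N F \<longleftrightarrow> valid_net 2 2 N \<and>
     (\<forall>x y. net_eval N [x, y] = [fst (F (x, y)), snd (F (x, y))])"

end

theory Submission
  imports Defs
begin

text \<open>Take \<open>F(p) = 2p\<close> corrected by four ReLU ridges whose hinge lines \<open>x = 1/2\<close>,
  \<open>y = x/2\<close>, \<open>x - y = 1/2\<close> and \<open>x + y = 1\<close> pass through the edge midpoints
  \<open>E(1/6)\<close>, \<open>E(1/2)\<close>, \<open>E(5/6)\<close>, which \<open>r\<close> sends to vertices of \<open>\<Gamma>\<close>; on each half-edge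
  \<open>F\<close> is then the affine map required by \<open>E \<circ> r\<close>. Any map \<open>b + \<Sum> relu(w \<bullet> p - c) v\<close> is
  affine on every cell of the arrangement of its hinge lines, hence CPwL, and it is computed
  by a ReLU network with one hidden neuron per hinge.\<close>

lemma affine_on_subset: "affine_on F P \<Longrightarrow> Q \<subseteq> P \<Longrightarrow> affine_on F Q"
  unfolding affine_on_def by blast

lemma affine_on_cong: "(\<And>x. x \<in> P \<Longrightarrow> F x = G x) \<Longrightarrow> affine_on G P \<Longrightarrow> affine_on F P"
  unfolding affine_on_def by simp

lemma affine_on_const: "affine_on (\<lambda>x. b) P"
  unfolding affine_on_def by (rule exI[of _ "\<lambda>x. 0"]) (auto intro: linear_zero)

lemma affine_on_add:
  assumes "affine_on F P" "affine_on G P"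
  shows "affine_on (\<lambda>x. F x + G x) P"
proof -
  obtain A a B b where "linear A" "linear B" "\<forall>x\<in>P. F x = A x + a" "\<forall>x\<in>P. G x = B x + b"
    using assms unfolding affine_on_def by metis
  then have "linear (\<lambda>x. A x + B x)" "\<forall>x\<in>P. F x + G x = (A x + B x) + (a + b)"
    by (auto intro: linear_compose_add simp: algebra_simps)
  then show ?thesis
    unfolding affine_on_def by blast
qed

lemma affine_on_sum_list:
  "(\<And>h. h \<in> set hs \<Longrightarrow> affine_on (f h) P) \<Longrightarrow> affine_on (\<lambda>x. \<Sum>h\<leftarrow>hs. f h x) P"
  by (induction hs) (auto intro: affine_on_add affine_on_const)

lemma CPwL_if_polyhedral_pieces:
  assumes "continuous_on UNIV F" "finite \<P>" "\<Union>\<P> = UNIV"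
    and pieces: "\<And>P. P \<in> \<P> \<Longrightarrow> polyhedron P \<and> affine_on F P"
  shows "CPwL F"
  unfolding CPwL_def
proof (intro conjI allI impI)
  fix K :: "(real \<times> real) set"
  assume "compact K"
  then obtain a where a: "K \<subseteq> cbox (-a) a"
    using bounded_subset_cbox_symmetric compact_imp_bounded by metis
  let ?\<C> = "(\<lambda>P. cbox (-a) a \<inter> P) ` \<P>"
  have "\<forall>C\<in>?\<C>. polytope C \<and> affine_on F C"
    using pieces by (auto intro: polytope_Int_polyhedron polytope_interval affine_on_subset)
  moreover have "K \<subseteq> \<Union>?\<C>"
    using a \<open>\<Union>\<P> = UNIV\<close> by blast
  ultimately show "\<exists>\<C>. finite \<C> \<and> K \<subseteq> \<Union>\<C> \<and> (\<forall>P\<in>\<C>. polytope P \<and> affine_on F P)"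
    using \<open>finite \<P>\<close> by blast
qed (fact assms)

type_synonym hinge = "(real \<times> real) \<times> real \<times> (real \<times> real)"

definition ridge :: "hinge \<Rightarrow> real \<times> real \<Rightarrow> real \<times> real" where
  "ridge h p = (case h of (w, c, v) \<Rightarrow> relu (w \<bullet> p - c) *\<^sub>R v)"

definition hinge_sum :: "real \<times> real \<Rightarrow> hinge list \<Rightarrow> real \<times> real \<Rightarrow> real \<times> real" where
  "hinge_sum b hs p = b + (\<Sum>h\<leftarrow>hs. ridge h p)"

lemma continuous_on_hinge_sum: "continuous_on UNIV (hinge_sum b hs)"
proof (induction hs)
  case Nil
  then show ?case by (simp add: hinge_sum_def)
next
  case (Cons h hs)
  have "continuous_on UNIV (ridge h)"
    unfolding ridge_def relu_def prod.case_eq_if by (intro continuous_intros)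
  then have "continuous_on UNIV (\<lambda>p. ridge h p + hinge_sum b hs p)"
    using Cons.IH by (intro continuous_intros)
  then show ?case
    by (simp add: hinge_sum_def algebra_simps)
qed

lemma affine_on_ridge:
  assumes "P \<subseteq> {p. c \<le> w \<bullet> p} \<or> P \<subseteq> {p. w \<bullet> p \<le> c}"
  shows "affine_on (ridge (w, c, v)) P"
  using assms
proof
  assume "P \<subseteq> {p. c \<le> w \<bullet> p}"
  then have "\<forall>p\<in>P. ridge (w, c, v) p = (w \<bullet> p) *\<^sub>R v + (- c *\<^sub>R v)"
    by (auto simp: ridge_def relu_def scaleR_diff_left)
  moreover have "linear (\<lambda>p. (w \<bullet> p) *\<^sub>R v)"
    by (rule linearI) (auto simp: inner_add_right scaleR_add_left)
  ultimately show ?thesis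
    unfolding affine_on_def by blast
next
  assume "P \<subseteq> {p. w \<bullet> p \<le> c}"
  then show ?thesis
    by (intro affine_on_cong[OF _ affine_on_const[of 0]]) (auto simp: ridge_def relu_def)
qed

definition hinge_cell :: "hinge list \<Rightarrow> hinge set \<Rightarrow> (real \<times> real) set" where
  "hinge_cell hs S = (\<Inter>(w, c, v)\<in>S. {p. c \<le> w \<bullet> p}) \<inter> (\<Inter>(w, c, v)\<in>set hs - S. {p. w \<bullet> p \<le> c})"

lemma polyhedron_hinge_cell: "finite S \<Longrightarrow> polyhedron (hinge_cell hs S)"
  unfolding hinge_cell_def
  by (intro polyhedron_Int polyhedron_Inter)
     (auto simp: polyhedron_halfspace_ge polyhedron_halfspace_le)

lemma affine_on_hinge_cell:
  assumes "S \<subseteq> set hs"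
  shows "affine_on (hinge_sum b hs) (hinge_cell hs S)"
proof -
  have "affine_on (ridge (w, c, v)) (hinge_cell hs S)" if "(w, c, v) \<in> set hs" for w c v
  proof (rule affine_on_ridge)
    show "hinge_cell hs S \<subseteq> {p. c \<le> w \<bullet> p} \<or> hinge_cell hs S \<subseteq> {p. w \<bullet> p \<le> c}"
      using that by (cases "(w, c, v) \<in> S") (auto simp: hinge_cell_def)
  qed
  then show ?thesis
    unfolding hinge_sum_def by (auto intro!: affine_on_add affine_on_const affine_on_sum_list)
qed

lemma mem_hinge_cell_sign_pattern:
  "p \<in> hinge_cell hs {h \<in> set hs. case h of (w, c, v) \<Rightarrow> c \<le> w \<bullet> p}"
  unfolding hinge_cell_def by force

lemma Union_hinge_cells: "\<Union>(hinge_cell hs ` Pow (set hs)) = UNIV"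
proof (rule UNIV_eq_I[symmetric])
  show "p \<in> \<Union>(hinge_cell hs ` Pow (set hs))" for p
    using mem_hinge_cell_sign_pattern[of p hs] by (rule UN_I[rotated]) auto
qed

lemma CPwL_hinge_sum: "CPwL (hinge_sum b hs)"
  by (rule CPwL_if_polyhedral_pieces[of _ "hinge_cell hs ` Pow (set hs)"])
     (auto simp: continuous_on_hinge_sum Union_hinge_cells affine_on_hinge_cell
           intro: polyhedron_hinge_cell finite_subset)

lemma fst_sum_list: "fst (sum_list xs) = sum_list (map fst xs)"
  by (induction xs) auto

lemma snd_sum_list: "snd (sum_list xs) = sum_list (map snd xs)"
  by (induction xs) auto

definition hinge_net :: "real \<times> real \<Rightarrow> hinge list \<Rightarrow> (real list list \<times> real list) list" where
  "hinge_net b hs =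
     [(map (\<lambda>(w, c, v). [fst w, snd w]) hs, map (\<lambda>(w, c, v). - c) hs),
      ([map (\<lambda>(w, c, v). fst v) hs, map (\<lambda>(w, c, v). snd v) hs], [fst b, snd b])]"

lemma relu_realizes_hinge_net: "relu_realizes (hinge_net b hs) (hinge_sum b hs)"
  unfolding relu_realizes_def
proof (intro conjI allI)
  show "valid_net 2 2 (hinge_net b hs)"
    by (auto simp: hinge_net_def)
next
  fix x y :: real
  let ?hidden = "map (\<lambda>(w, c, v). relu (w \<bullet> (x, y) - c)) hs"
  let ?output = "([map (\<lambda>(w, c, v). fst v) hs, map (\<lambda>(w, c, v). snd v) hs], [fst b, snd b])"
  have "net_eval (hinge_net b hs) [x, y] = layer_affine ?output ?hidden"
    by (simp add: hinge_net_def layer_affine_def zip_map_map zip_same_conv_map split_def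
        inner_prod_def)
  also have "\<dots> = [fst (hinge_sum b hs (x, y)), snd (hinge_sum b hs (x, y))]"
    by (simp add: layer_affine_def hinge_sum_def ridge_def fst_sum_list snd_sum_list
        zip_map_map zip_same_conv_map split_def o_def mult.commute)
  finally show "net_eval (hinge_net b hs) [x, y] =
      [fst (hinge_sum b hs (x, y)), snd (hinge_sum b hs (x, y))]" .
qed

text \<open>The first four hinges produce the linear part \<open>(x, y) \<mapsto> (2x - 2y, 2y)\<close>, via
  \<open>relu u - relu (-u) = u\<close>.\<close>
definition doubling_hinges :: "hinge list" where
  "doubling_hinges =
     [((1, 0), 0, (2, 0)), ((-1, 0), 0, (-2, 0)), ((0, 1), 0, (-2, 2)), ((0, -1), 0, (2, -2)),
      ((2, 0), 1, (-1, 0)), ((-2, 4), 0, (1, 0)), ((2, -2), 1, (0, 1)), ((2, 2), 2, (0, -1))]"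

lemma relu_diff_relu_uminus: "relu u - relu (- u) = u"
  by (simp add: relu_def)

lemma hinge_sum_doubling_hinges:
  "hinge_sum 0 doubling_hinges (x, y) =
     (2 * x - 2 * y - relu (2 * x - 1) + relu (4 * y - 2 * x),
      2 * y + relu (2 * x - 2 * y - 1) - relu (2 * x + 2 * y - 2))"
proof -
  have "hinge_sum 0 doubling_hinges (x, y) =
     (2 * (relu x - relu (- x)) - 2 * (relu y - relu (- y)) - relu (2 * x - 1) + relu (4 * y - 2 * x),
      2 * (relu y - relu (- y)) + relu (2 * x - 2 * y - 1) - relu (2 * x + 2 * y - 2))"
    by (simp add: hinge_sum_def doubling_hinges_def ridge_def algebra_simps)
  then show ?thesis
    by (simp only: relu_diff_relu_uminus)
qed

lemma hinge_sum_doubling_hinges_E_param: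
  assumes "t \<in> {0..1}"
  shows "hinge_sum 0 doubling_hinges (E_param t) = E_param (r_map t)"
proof -
  consider "t = 1" | "t < 1/2" | "1/2 \<le> t" "t < 1"
    using assms by fastforce
  then show ?thesis
  proof cases
    case 1
    then show ?thesis
      by (simp add: hinge_sum_doubling_hinges E_param_def r_map_def relu_def)
  next
    case 2
    then have "\<lfloor>2 * t\<rfloor> = 0"
      using assms by (simp add: floor_eq_iff)
    then show ?thesis
      using 2 assms by (simp add: hinge_sum_doubling_hinges E_param_def r_map_def relu_def)
  next
    case 3
    then have "\<lfloor>2 * t\<rfloor> = 1"
      using assms by (simp add: floor_eq_iff)
    then show ?thesis
      using 3 assms by (simp add: hinge_sum_doubling_hinges E_param_def r_map_def relu_def)
  qed
qed

theorem mainTheorem4: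
  shows "\<exists>F. CPwL F \<and> (\<forall>t\<in>{0..1}. F (E_param t) = E_param (r_map t)) \<and>
             (\<exists>N. relu_realizes N F)"
  using CPwL_hinge_sum[of 0 doubling_hinges] hinge_sum_doubling_hinges_E_param
    relu_realizes_hinge_net[of 0 doubling_hinges]
  by blast

end
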